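(* Let $0<q<p$ with $p+q=1$, and let $\mathcal D$ be the set of Dyck words over $\{S,H\}$ (S an up-step, H a down-step: equally many S and H, every prefix with at least as many S as H), including the empty word, endowed with the probability measure $\bar{\mathbb P}[w]=p(pq)^{|w|}$, where $|w|$ is half the length of $w$. For every integer $n\ge1$, the $\bar{\mathbb P}$-probability that a Dyck word ends with the subsequence $SH\cdots H$ with exactly $n$ letters H at the end is $pq^n$.
   Context: $\bar{\mathbb P}$ is a probability measure on $\mathcal D$: $\bar{\mathbb P}[w]$ is the probability that a random walk from $0$, with up-step probability $q$ and down-step probability $p$, follows the path $w$ and then steps to $-1$. *)

theory Defs
  imports "HOL-Analysis.Analysis"
begin

datatype letter = S | H

definition nS :: "letter list \<Rightarrow> nat" where
  "nS w = length (filter (\<lambda>x. x = S) w)"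

definition nH :: "letter list \<Rightarrow> nat" where
  "nH w = length (filter (\<lambda>x. x = H) w)"

definition dyck :: "letter list \<Rightarrow> bool" where
  "dyck w \<longleftrightarrow> nS w = nH w \<and> (\<forall>k \<le> length w. nH (take k w) \<le> nS (take k w))"

definition semilen :: "letter list \<Rightarrow> nat" where
  "semilen w = length w div 2"

definition Pbar_weight :: "real \<Rightarrow> real \<Rightarrow> letter list \<Rightarrow> real" where
  "Pbar_weight p q w = p * (p * q) ^ semilen w"

definition Pbar :: "real \<Rightarrow> real \<Rightarrow> letter list set \<Rightarrow> real" where
  "Pbar p q A = infsum (Pbar_weight p q) (A \<inter> {w. dyck w})"

end

theory Submission
  imports Defs
begin

text \<open>
  Let T be the sum of (pq)^|w| over all Dyck words. Cutting a nonempty Dyck word at its last visit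
  to level 0 before the end writes it uniquely as a S b H with a, b Dyck words, so
  T = 1 + pq T^2, whose roots are 1/p and 1/q. The partial sums over words of bounded length obey
  the same recursion as an inequality and hence stay below 1/p, which selects T = 1/p. Cutting a
  walk that never goes below 0 and ends at level m+1 at its last visit to level m shows that such
  walks have generating function T^(m+1). A Dyck word ends in S H^n exactly when it is u S H^n
  with u such a walk ending at level n-1, so the weight of these words is p (pq)^n T^n = p q^n.
\<close>

lemma has_sum_Times_mult:
  fixes f :: "'a \<Rightarrow> real" and g :: "'b \<Rightarrow> real"
  assumes f: "(f has_sum a) A" and g: "(g has_sum b) B"
    and f_nonneg: "\<And>x. x \<in> A \<Longrightarrow> 0 \<le> f x" and g_nonneg: "\<And>y. y \<in> B \<Longrightarrow> 0 \<le> g y"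
  shows "((\<lambda>(x, y). f x * g y) has_sum a * b) (A \<times> B)"
proof (rule has_sum_SigmaI)
  show rows: "((\<lambda>y. case (x, y) of (x, y) \<Rightarrow> f x * g y) has_sum f x * b) B" for x
    using has_sum_cmult_right[OF g] by simp
  show "((\<lambda>x. f x * b) has_sum a * b) A"
    using has_sum_cmult_left[OF f] .
  then show "(\<lambda>(x, y). f x * g y) summable_on A \<times> B"
    using rows f_nonneg g_nonneg by (intro summable_on_SigmaI) (auto intro: has_sum_imp_summable)
qed

fun height :: "nat \<Rightarrow> letter list \<Rightarrow> nat option" where
  "height h [] = Some h"
| "height h (S # w) = height (Suc h) w"
| "height h (H # w) = (if h = 0 then None else height (h - 1) w)"

lemma nS_simps [simp]:
  "nS [] = 0" "nS (S # w) = Suc (nS w)" "nS (H # w) = nS w" "nS (u @ v) = nS u + nS v"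
  by (simp_all add: nS_def)

lemma nH_simps [simp]:
  "nH [] = 0" "nH (S # w) = nH w" "nH (H # w) = Suc (nH w)" "nH (u @ v) = nH u + nH v"
  by (simp_all add: nH_def)

lemma nH_replicate_H [simp]: "nH (replicate n H) = n"
  by (induction n) simp_all

lemma length_eq_nS_plus_nH: "length w = nS w + nH w"
proof (induction w)
  case (Cons a w)
  then show ?case by (cases a) simp_all
qed simp

lemma height_append:
  "height h (u @ v) = (case height h u of None \<Rightarrow> None | Some k \<Rightarrow> height k v)"
proof (induction u arbitrary: h)
  case (Cons a u)
  then show ?case by (cases a) auto
qed simp

lemma height_eq_Some_iff:
  "height h w = Some k \<longleftrightarrow>
     (\<forall>i\<le>length w. nH (take i w) \<le> h + nS (take i w)) \<and> h + nS w = k + nH w"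
proof (induction w arbitrary: h)
  case (Cons a w)
  have prefixes: "(\<forall>i\<le>length (a # w). P (take i (a # w))) \<longleftrightarrow>
      P [] \<and> (\<forall>i\<le>length w. P (a # take i w))" for P
    by (simp only: less_Suc_eq_le[symmetric] All_less_Suc2 length_Cons) simp
  show ?case
  proof (cases a)
    case S
    then show ?thesis
      using Cons[of "Suc h"] unfolding prefixes[of "\<lambda>t. nH t \<le> h + nS t"] by simp
  next
    case H
    then show ?thesis
      using Cons[of "h - 1"] unfolding prefixes[of "\<lambda>t. nH t \<le> h + nS t"] by (cases h) auto
  qed
qed simp

lemma dyck_iff_height: "dyck w \<longleftrightarrow> height 0 w = Some 0"
  unfolding dyck_def height_eq_Some_iff by auto

lemma height_counts: "height h w = Some k \<Longrightarrow> h + nS w = k + nH w"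
  by (simp add: height_eq_Some_iff)

lemma height_shift: "height h w = Some k \<Longrightarrow> height (h + c) w = Some (k + c)"
proof (induction w arbitrary: h)
  case (Cons a w)
  show ?case
  proof (cases a)
    case S
    then show ?thesis using Cons.IH[of "Suc h"] Cons.prems by simp
  next
    case H
    then show ?thesis using Cons.IH[of "h - 1"] Cons.prems by (auto split: if_splits)
  qed
qed simp

lemma height_replicate_H: "height h (replicate n H) = (if n \<le> h then Some (h - n) else None)"
  by (induction n arbitrary: h) (auto split: nat.splits)

lemma height_snoc_H: "height h (u @ [H]) = Some k \<longleftrightarrow> height h u = Some (Suc k)"
  by (auto simp: height_append split: option.splits)

lemma height_join:
  assumes "height 0 a = Some m" "height 0 b = Some j"
  shows "height 0 (a @ S # b) = Some (Suc m + j)"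
  using height_shift[OF assms(2), of "Suc m"] assms(1) by (simp add: height_append add.commute)

lemma height_last_visit:
  assumes "height 0 u = Some k" "m < k"
  shows "\<exists>a b. u = a @ S # b \<and> height 0 a = Some m \<and> height 0 b = Some (k - Suc m)"
  using assms
proof (induction u arbitrary: k rule: rev_induct)
  case (snoc l u)
  then obtain i where i: "height 0 u = Some i"
    by (auto simp: height_append split: option.splits)
  show ?case
  proof (cases l)
    case S
    then have k: "k = Suc i" using snoc.prems i by (simp add: height_append)
    show ?thesis
    proof (cases "m < i")
      case True
      with snoc.IH[OF i] obtain a b where
        "u = a @ S # b" "height 0 a = Some m" "height 0 b = Some (i - Suc m)" by blast
      then show ?thesis
        using S k True by (intro exI[of _ a] exI[of _ "b @ [S]"]) (simp add: height_append)
    next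
      case False
      then show ?thesis using S i k snoc.prems by (intro exI[of _ u] exI[of _ "[]"]) simp
    qed
  next
    case H
    then have i': "i = Suc k" using snoc.prems i by (simp add: height_snoc_H)
    with snoc.IH[OF i] snoc.prems obtain a b where
      "u = a @ S # b" "height 0 a = Some m" "height 0 b = Some (i - Suc m)" by auto
    then show ?thesis
      using H i' snoc.prems
      by (intro exI[of _ a] exI[of _ "b @ [H]"]) (simp add: height_snoc_H Suc_diff_Suc)
  qed
qed simp

lemma height_zero_None_if_descends:
  assumes "height h w = Some k" "k < h"
  shows "height 0 w = None"
proof (rule ccontr)
  assume "height 0 w \<noteq> None"
  then obtain i where "height 0 w = Some i" by blast
  from height_counts[OF this] height_counts[OF assms(1)] assms(2) show False by simp
qed

lemma height_join_overlap:
  assumes "height 0 x = Some m" "height 0 (x @ S # c) = Some m"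
  shows "height 0 (c @ S # y) = None"
proof -
  have "height (Suc m) c = Some m" using assms by (simp add: height_append)
  then have "height 0 c = None" by (rule height_zero_None_if_descends) simp
  then show ?thesis by (simp add: height_append)
qed

lemma join_unique:
  assumes "a @ S # b = a' @ S # b'"
    and "height 0 a = Some m" "height 0 a' = Some m" "height 0 b = Some j" "height 0 b' = Some j"
  shows "a = a' \<and> b = b'"
proof -
  from assms(1) obtain us where
    "a = a' @ us \<and> us @ S # b = S # b' \<or> a @ us = a' \<and> S # b = us @ S # b'"
    by (auto simp: append_eq_append_conv2)
  then show ?thesis
  proof
    assume "a = a' @ us \<and> us @ S # b = S # b'"
    then show ?thesis using height_join_overlap[of a' m _ b] assms(2-5) by (cases us) auto
  next
    assume "a @ us = a' \<and> S # b = us @ S # b'"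
    then show ?thesis using height_join_overlap[of a m _ b'] assms(2-5) by (cases us) auto
  qed
qed

definition dyck_prefixes :: "nat \<Rightarrow> letter list set" where
  "dyck_prefixes m = {w. height 0 w = Some m}"

lemma dyck_prefixes_Suc:
  "dyck_prefixes (Suc m) = (\<lambda>(a, b). a @ S # b) ` (dyck_prefixes m \<times> dyck_prefixes 0)"
proof
  show "dyck_prefixes (Suc m) \<subseteq> (\<lambda>(a, b). a @ S # b) ` (dyck_prefixes m \<times> dyck_prefixes 0)"
  proof
    fix w assume "w \<in> dyck_prefixes (Suc m)"
    then obtain a b where "w = a @ S # b" "height 0 a = Some m" "height 0 b = Some 0"
      using height_last_visit[of w "Suc m" m] by (auto simp: dyck_prefixes_def)
    then show "w \<in> (\<lambda>(a, b). a @ S # b) ` (dyck_prefixes m \<times> dyck_prefixes 0)"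
      by (intro image_eqI[of _ _ "(a, b)"]) (simp_all add: dyck_prefixes_def)
  qed
  show "(\<lambda>(a, b). a @ S # b) ` (dyck_prefixes m \<times> dyck_prefixes 0) \<subseteq> dyck_prefixes (Suc m)"
    using height_join[of _ m _ 0] by (auto simp: dyck_prefixes_def)
qed

lemma inj_on_join: "inj_on (\<lambda>(a, b). a @ S # b) (dyck_prefixes m \<times> dyck_prefixes j)"
proof (rule inj_onI)
  fix x y
  assume "x \<in> dyck_prefixes m \<times> dyck_prefixes j" "y \<in> dyck_prefixes m \<times> dyck_prefixes j"
    and "(\<lambda>(a, b). a @ S # b) x = (\<lambda>(a, b). a @ S # b) y"
  then show "x = y"
    using join_unique[of "fst x" "snd x" "fst y" "snd y" m j]
    by (auto simp: dyck_prefixes_def split: prod.splits)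
qed

lemma dyck_prefixes_0_eq: "dyck_prefixes 0 = insert [] ((\<lambda>u. u @ [H]) ` dyck_prefixes 1)"
proof
  show "dyck_prefixes 0 \<subseteq> insert [] ((\<lambda>u. u @ [H]) ` dyck_prefixes 1)"
  proof
    fix w assume w: "w \<in> dyck_prefixes 0"
    show "w \<in> insert [] ((\<lambda>u. u @ [H]) ` dyck_prefixes 1)"
    proof (cases w rule: rev_exhaust)
      case (snoc u l)
      with w have "l = H" by (cases l) (auto simp: dyck_prefixes_def height_append split: option.splits)
      with w snoc show ?thesis by (auto simp: dyck_prefixes_def height_snoc_H)
    qed simp
  qed
  show "insert [] ((\<lambda>u. u @ [H]) ` dyck_prefixes 1) \<subseteq> dyck_prefixes 0"
    by (auto simp: dyck_prefixes_def height_snoc_H)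
qed

lemma has_sum_dyck_prefixes_Suc:
  fixes x :: real
  assumes "0 \<le> x"
    and "((\<lambda>w. x ^ nH w) has_sum s) (dyck_prefixes m)"
    and "((\<lambda>w. x ^ nH w) has_sum t) (dyck_prefixes 0)"
  shows "((\<lambda>w. x ^ nH w) has_sum s * t) (dyck_prefixes (Suc m))"
proof -
  have "((\<lambda>(a, b). x ^ nH a * x ^ nH b) has_sum s * t) (dyck_prefixes m \<times> dyck_prefixes 0)"
    using assms by (intro has_sum_Times_mult) auto
  also have "(\<lambda>(a, b). x ^ nH a * x ^ nH b) = (\<lambda>w. x ^ nH w) \<circ> (\<lambda>(a, b). a @ S # b)"
    by (auto simp: power_add)
  finally show ?thesis
    using has_sum_reindex[OF inj_on_join] dyck_prefixes_Suc by metis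
qed

lemma has_sum_dyck_prefixes:
  fixes x :: real
  assumes "0 \<le> x" "((\<lambda>w. x ^ nH w) has_sum t) (dyck_prefixes 0)"
  shows "((\<lambda>w. x ^ nH w) has_sum t ^ Suc m) (dyck_prefixes m)"
proof (induction m)
  case (Suc m)
  show ?case
    unfolding power_Suc2[of t "Suc m"] by (rule has_sum_dyck_prefixes_Suc[OF assms(1) Suc.IH assms(2)])
qed (use assms in simp)

lemma has_sum_dyck_quadratic:
  fixes x :: real
  assumes "0 \<le> x" "((\<lambda>w. x ^ nH w) has_sum t) (dyck_prefixes 0)"
  shows "t = 1 + x * t\<^sup>2"
proof -
  have "((\<lambda>u. x * x ^ nH u) has_sum x * t\<^sup>2) (dyck_prefixes 1)"
    using has_sum_cmult_right[OF has_sum_dyck_prefixes[OF assms, of 1], of x]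
    by (simp add: power2_eq_square)
  moreover have "(\<lambda>u. x * x ^ nH u) = (\<lambda>w. x ^ nH w) \<circ> (\<lambda>u. u @ [H])"
    by (simp add: fun_eq_iff)
  moreover have "inj_on (\<lambda>u. u @ [H]) (dyck_prefixes 1)"
    by (simp add: inj_on_def)
  ultimately have "((\<lambda>w. x ^ nH w) has_sum x * t\<^sup>2) ((\<lambda>u. u @ [H]) ` dyck_prefixes 1)"
    using has_sum_reindex by metis
  then have "((\<lambda>w. x ^ nH w) has_sum x ^ nH [] + x * t\<^sup>2) (dyck_prefixes 0)"
    unfolding dyck_prefixes_0_eq by (rule has_sum_insert[rotated]) auto
  with assms(2) show ?thesis using has_sum_unique by simp
qed

lemma finite_words_length_le: "finite {w :: letter list. length w \<le> N}"
proof -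
  have "{w :: letter list. length w \<le> N} = {w. set w \<subseteq> {S, H} \<and> length w \<le> N}"
    using letter.exhaust by blast
  then show ?thesis using finite_lists_length_le[of "{S, H}" N] by simp
qed

lemma dyck_last_return:
  assumes "w \<in> dyck_prefixes 0" "w \<noteq> []"
  obtains a b where "w = a @ S # b @ [H]" "a \<in> dyck_prefixes 0" "b \<in> dyck_prefixes 0"
proof -
  obtain u where u: "w = u @ [H]" "u \<in> dyck_prefixes (Suc 0)"
    using assms dyck_prefixes_0_eq by auto
  then obtain a b where "u = a @ S # b" "a \<in> dyck_prefixes 0" "b \<in> dyck_prefixes 0"
    using dyck_prefixes_Suc[of 0] by auto
  with u show ?thesis using that by simp
qed

lemma sum_dyck_length_le:
  fixes p q :: real
  assumes "0 \<le> q" "q \<le> p" "p + q = 1"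
  shows "(\<Sum>w | w \<in> dyck_prefixes 0 \<and> length w \<le> N. (p * q) ^ nH w) \<le> 1 / p"
proof (induction N)
  case 0
  have "{w. w \<in> dyck_prefixes 0 \<and> length w \<le> 0} = {[]}"
    by (auto simp: dyck_prefixes_def)
  then show ?case using assms by simp
next
  case (Suc N)
  define D where "D N = {w. w \<in> dyck_prefixes 0 \<and> length w \<le> N}" for N
  define g where "g w = (p * q) ^ nH w" for w
  define s where "s = sum g (D N)"
  let ?phi = "\<lambda>(a, b). a @ S # b @ [H]"
  have fin: "finite (D N)" for N
    using finite_words_length_le by (rule rev_finite_subset) (auto simp: D_def)
  have g_nonneg: "0 \<le> g w" for w
    using assms by (simp add: g_def)
  have "D (Suc N) \<subseteq> insert [] (?phi ` (D N \<times> D N))"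
  proof
    fix w assume w: "w \<in> D (Suc N)"
    show "w \<in> insert [] (?phi ` (D N \<times> D N))"
    proof (cases "w = []")
      case False
      with w obtain a b where "w = a @ S # b @ [H]" "a \<in> dyck_prefixes 0" "b \<in> dyck_prefixes 0"
        using dyck_last_return by (auto simp: D_def)
      with w show ?thesis by (intro insertI2 image_eqI[of _ _ "(a, b)"]) (auto simp: D_def)
    qed simp
  qed
  then have "sum g (D (Suc N)) \<le> sum g (insert [] (?phi ` (D N \<times> D N)))"
    using fin g_nonneg by (intro sum_mono2) auto
  also have "\<dots> = g [] + sum g (?phi ` (D N \<times> D N))"
    using fin by (intro sum.insert) auto
  also have "sum g (?phi ` (D N \<times> D N)) \<le> sum (g \<circ> ?phi) (D N \<times> D N)"
    using fin g_nonneg by (intro sum_image_le) auto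
  also have "\<dots> = (\<Sum>a\<in>D N. \<Sum>b\<in>D N. p * q * (g a * g b))"
    unfolding sum.cartesian_product by (intro sum.cong) (auto simp: g_def power_add)
  also have "\<dots> = p * q * s\<^sup>2"
    by (simp add: s_def power2_eq_square sum_product sum_distrib_left[symmetric])
  also have "p * q * s\<^sup>2 \<le> p * q * (1 / p)\<^sup>2"
    using Suc assms g_nonneg
    by (intro mult_left_mono power_mono) (auto simp: s_def D_def g_def intro: sum_nonneg)
  also have "g [] + p * q * (1 / p)\<^sup>2 = 1 / p"
    using assms by (simp add: g_def field_simps power2_eq_square)
  finally show ?case by (simp add: D_def g_def)
qed

lemma sum_dyck_le:
  fixes p q :: real
  assumes "0 \<le> q" "q \<le> p" "p + q = 1" and F: "finite F" "F \<subseteq> dyck_prefixes 0"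
  shows "(\<Sum>w\<in>F. (p * q) ^ nH w) \<le> 1 / p"
proof -
  define N where "N = Max (insert 0 (length ` F))"
  have "F \<subseteq> {w. w \<in> dyck_prefixes 0 \<and> length w \<le> N}"
    using F by (auto simp: N_def)
  then have "(\<Sum>w\<in>F. (p * q) ^ nH w) \<le>
      (\<Sum>w | w \<in> dyck_prefixes 0 \<and> length w \<le> N. (p * q) ^ nH w)"
    using assms finite_words_length_le[of N] by (intro sum_mono2) (auto elim: rev_finite_subset)
  also have "\<dots> \<le> 1 / p"
    by (rule sum_dyck_length_le[OF assms(1-3)])
  finally show ?thesis .
qed

lemma quadratic_root_le_inverse:
  fixes p q t :: real
  assumes "0 \<le> q" "q \<le> p" "p + q = 1" and t: "t = 1 + p * q * t\<^sup>2" "t \<le> 1 / p"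
  shows "t = 1 / p"
proof -
  have p: "0 < p" using assms by simp
  have "(p * t - 1) * (q * t - 1) = p * q * t\<^sup>2 - (p + q) * t + 1"
    by (simp add: algebra_simps power2_eq_square)
  also have "\<dots> = 0" using t(1) assms(3) by simp
  finally have "p * t = 1 \<or> q * t = 1" by simp
  moreover have "p * t = 1" if qt: "q * t = 1"
  proof -
    have "0 < q" using qt assms(1) by (cases "q = 0") auto
    moreover have "t = 1 / q" using qt \<open>0 < q\<close> by (simp add: field_simps)
    moreover have "1 / p \<le> 1 / q" using \<open>0 < q\<close> assms(2) by (simp add: frac_le)
    ultimately show ?thesis using t(2) p by simp
  qed
  ultimately show ?thesis using p by (auto simp: field_simps)
qed

lemma has_sum_dyck:
  fixes p q :: real
  assumes "0 \<le> q" "q \<le> p" "p + q = 1"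
  shows "((\<lambda>w. (p * q) ^ nH w) has_sum 1 / p) (dyck_prefixes 0)"
proof -
  have "(\<lambda>w. (p * q) ^ nH w) summable_on dyck_prefixes 0"
    using assms sum_dyck_le[OF assms]
    by (intro nonneg_bdd_above_summable_on bdd_aboveI2) auto
  then obtain t where t: "((\<lambda>w. (p * q) ^ nH w) has_sum t) (dyck_prefixes 0)"
    using has_sum_infsum by blast
  have "t \<le> 1 / p"
    using has_sum_le_finite_sums[OF t sum_dyck_le[OF assms]] .
  moreover have "t = 1 + p * q * t\<^sup>2"
    using has_sum_dyck_quadratic[OF _ t] assms by simp
  ultimately have "t = 1 / p"
    using quadratic_root_le_inverse[OF assms] by blast
  with t show ?thesis by simp
qed

lemma semilen_eq_nH: "dyck w \<Longrightarrow> semilen w = nH w"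
  using length_eq_nS_plus_nH[of w] by (simp add: dyck_def semilen_def)

lemma dyck_append_S_replicate_H:
  "1 \<le> n \<Longrightarrow> dyck (u @ S # replicate n H) \<longleftrightarrow> u \<in> dyck_prefixes (n - 1)"
  by (cases "height 0 u")
    (auto simp: dyck_iff_height dyck_prefixes_def height_append height_replicate_H)

lemma Pbar_weight_append_S_replicate_H:
  assumes "dyck (u @ S # replicate n H)"
  shows "Pbar_weight p q (u @ S # replicate n H) = p * (p * q) ^ n * (p * q) ^ nH u"
  using semilen_eq_nH[OF assms] by (simp add: Pbar_weight_def power_add)

theorem lemma9:
  fixes p q :: real and n :: nat
  assumes "0 < q" and "q < p" and "p + q = 1" and "n \<ge> 1"
  shows "(Pbar_weight p q has_sum (p * q ^ n))
           {w. dyck w \<and> (\<exists>u. w = u @ [S] @ replicate n H)}"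
proof -
  define tail where "tail u = u @ S # replicate n H" for u
  have words: "{w. dyck w \<and> (\<exists>u. w = u @ [S] @ replicate n H)} = tail ` dyck_prefixes (n - 1)"
    using assms(4) by (auto simp: tail_def dyck_append_S_replicate_H image_iff)
  obtain m where n: "n = Suc m" using assms(4) by (cases n) auto
  have "((\<lambda>u. (p * q) ^ nH u) has_sum (1 / p) ^ n) (dyck_prefixes (n - 1))"
    using has_sum_dyck_prefixes[OF _ has_sum_dyck, of p q m] assms by (simp add: n)
  from has_sum_cmult_right[OF this, of "p * (p * q) ^ n"]
  have "((\<lambda>u. p * (p * q) ^ n * (p * q) ^ nH u) has_sum p * (p * q) ^ n * (1 / p) ^ n)
      (dyck_prefixes (n - 1))" .
  also have "p * (p * q) ^ n * (1 / p) ^ n = p * q ^ n"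
    using assms by (simp add: power_mult_distrib power_divide)
  finally have "((Pbar_weight p q \<circ> tail) has_sum p * q ^ n) (dyck_prefixes (n - 1))"
    by (rule has_sum_cong[THEN iffD1, rotated]) (use assms(4) in
      \<open>simp add: tail_def dyck_append_S_replicate_H Pbar_weight_append_S_replicate_H\<close>)
  moreover have "inj_on tail (dyck_prefixes (n - 1))"
    by (simp add: inj_on_def tail_def)
  ultimately show ?thesis
    using words has_sum_reindex by metis
qed

end
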